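(* Let $I=[\alpha,\beta]\subset\mathbb R$ and let $f,g:I\to\mathbb R$ be continuous functions such that there exist real numbers $0<m<M$ with $m\le f(x)\le M$ and $m\le g(x)\le M$ for all $x\in I$, and $\max(\|f-g\|_{L^1(I)},\|f-g\|_\infty)<m$. Fix $x_0\in I$ and let $\gamma$ and $\eta$ be the solutions of $\dot x=f(x)$ and $\dot x=g(x)$ respectively with $\gamma(0)=\eta(0)=x_0$, defined (with values in $I$) on intervals of times $J_\gamma$ and $J_\eta$. Then for all $t\in J_\gamma\cap J_\eta$, $$|\gamma(t)-\eta(t)|\le\frac{M}{m^2}\|f-g\|_{L^1(I)}.$$
   Context: $\|\cdot\|_{L^1(I)}$ and $\|\cdot\|_\infty$ are the usual $L^1$ and sup norms on $I$. *)

theory Defs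
  imports "HOL-Analysis.Analysis"
begin

definition L1_norm_on :: "real \<Rightarrow> real \<Rightarrow> (real \<Rightarrow> real) \<Rightarrow> real" where
  "L1_norm_on a b h = integral {a..b} (\<lambda>x. \<bar>h x\<bar>)"

definition sup_norm_on :: "real \<Rightarrow> real \<Rightarrow> (real \<Rightarrow> real) \<Rightarrow> real" where
  "sup_norm_on a b h = (SUP x\<in>{a..b}. \<bar>h x\<bar>)"

end

theory Submission
  imports Defs
begin

text \<open>
  A solution of \<open>x' = h(x)\<close> with \<open>h > 0\<close> is inverse to its time function
  \<open>T\<^sub>h(u) = \<integral>\<^sub>x\<^sub>0\<^sup>u 1/h\<close>, so \<open>T\<^sub>f(\<gamma> t) = t = T\<^sub>g(\<eta> t)\<close>. Hence
  \<open>T\<^sub>f(\<gamma> t) - T\<^sub>f(\<eta> t) = T\<^sub>g(\<eta> t) - T\<^sub>f(\<eta> t)\<close> is bounded by \<open>\<parallel>1/f - 1/g\<parallel>\<^sub>1 \<le> \<parallel>f - g\<parallel>\<^sub>1 / m\<^sup>2\<close>,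
  while \<open>T\<^sub>f' = 1/f \<ge> 1/M\<close> gives \<open>\<bar>\<gamma> t - \<eta> t\<bar> \<le> M \<bar>T\<^sub>f(\<gamma> t) - T\<^sub>f(\<eta> t)\<bar>\<close>.
\<close>

lemma integrable_on_subinterval:
  fixes h :: "real \<Rightarrow> real"
  assumes "continuous_on {a..b} h" "a \<le> u" "v \<le> b"
  shows "h integrable_on {u..v}"
  using assms by (meson atLeastatMost_subset_iff continuous_on_subset integrable_continuous_real order_refl)

lemma integral_diff_initial_segments:
  fixes h :: "real \<Rightarrow> real"
  assumes "continuous_on {a..b} h" "a \<le> c" "c \<le> d" "d \<le> b"
  shows "integral {a..d} h - integral {a..c} h = integral {c..d} h"
proof -
  have "integral {a..c} h + integral {c..d} h = integral {a..d} h"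
    by (rule Henstock_Kurzweil_Integration.integral_combine) (use assms integrable_on_subinterval[of a b h a d] in auto)
  then show ?thesis by simp
qed

lemma abs_integral_diff_initial_segments_le:
  fixes h :: "real \<Rightarrow> real"
  assumes hc: "continuous_on {a..b} h" and "u \<in> {a..b}" "v \<in> {a..b}"
  shows "\<bar>integral {a..v} h - integral {a..u} h\<bar> \<le> integral {a..b} (\<lambda>y. \<bar>h y\<bar>)"
proof -
  have hac: "continuous_on {a..b} (\<lambda>y. \<bar>h y\<bar>)"
    using hc by (intro continuous_intros)
  have ordered: "\<bar>integral {a..q} h - integral {a..p} h\<bar> \<le> integral {a..b} (\<lambda>y. \<bar>h y\<bar>)"
    if "p \<in> {a..b}" "q \<in> {a..b}" "p \<le> q" for p q
  proof -
    have "\<bar>integral {a..q} h - integral {a..p} h\<bar> = \<bar>integral {p..q} h\<bar>"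
      using integral_diff_initial_segments[OF hc] that by auto
    also have "\<dots> \<le> integral {p..q} (\<lambda>y. \<bar>h y\<bar>)"
      using integral_norm_bound_integral[of h "{p..q}" "\<lambda>y. \<bar>h y\<bar>"] that
        integrable_on_subinterval[OF hc, of p q] integrable_on_subinterval[OF hac, of p q] by auto
    also have "\<dots> \<le> integral {a..b} (\<lambda>y. \<bar>h y\<bar>)"
      by (rule integral_subset_le)
        (use that integrable_on_subinterval[OF hac, of p q] integrable_on_subinterval[OF hac, of a b] in auto)
    finally show ?thesis .
  qed
  show ?thesis
    using ordered[OF assms(2,3)] ordered[OF assms(3,2)] by (cases "u \<le> v") (auto simp: abs_minus_commute)
qed

lemma dist_le_mult_dist_primitive_inverse:
  fixes h :: "real \<Rightarrow> real"
  assumes hc: "continuous_on {a..b} h"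
    and bounds: "\<And>y. y \<in> {a..b} \<Longrightarrow> 0 < h y \<and> h y \<le> M"
    and "p \<in> {a..b}" "q \<in> {a..b}"
  shows "\<bar>p - q\<bar> \<le> M * \<bar>integral {a..p} (\<lambda>y. 1 / h y) - integral {a..q} (\<lambda>y. 1 / h y)\<bar>"
proof -
  define T where "T u = integral {a..u} (\<lambda>y. 1 / h y)" for u
  have ic: "continuous_on {a..b} (\<lambda>y. 1 / h y)"
    using hc bounds by (intro continuous_intros) (auto simp: less_imp_neq[symmetric])
  have M: "0 < M" using bounds assms(3) by force
  have ordered: "v - u \<le> M * \<bar>T v - T u\<bar>" if "u \<in> {a..b}" "v \<in> {a..b}" "u \<le> v" for u v
  proof -
    have "(v - u) / M = integral {u..v} (\<lambda>_. 1 / M)"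
      using that by simp
    also have "\<dots> \<le> integral {u..v} (\<lambda>y. 1 / h y)"
      by (rule integral_le) (use that bounds integrable_on_subinterval[OF ic, of u v] in \<open>auto simp: frac_le\<close>)
    also have "\<dots> = T v - T u"
      unfolding T_def using integral_diff_initial_segments[OF ic] that by auto
    also have "\<dots> \<le> \<bar>T v - T u\<bar>"
      by simp
    finally show ?thesis using M by (simp add: field_simps)
  qed
  show ?thesis
    using ordered[OF assms(3,4)] ordered[OF assms(4,3)] unfolding T_def[symmetric]
    by (cases "p \<le> q") (auto simp: abs_minus_commute)
qed

lemma abs_inverse_diff_le:
  fixes x y m :: real
  assumes "0 < m" "m \<le> x" "m \<le> y"
  shows "\<bar>1 / x - 1 / y\<bar> \<le> \<bar>x - y\<bar> / m\<^sup>2"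
proof -
  have "\<bar>1 / x - 1 / y\<bar> = \<bar>x - y\<bar> / (x * y)"
    using assms by (simp add: field_simps abs_div abs_mult abs_minus_commute)
  also have "\<dots> \<le> \<bar>x - y\<bar> / m\<^sup>2"
    using assms by (intro divide_left_mono) (auto simp: power2_eq_square intro: mult_mono)
  finally show ?thesis .
qed

lemma L1_norm_inverse_diff_le:
  fixes f g :: "real \<Rightarrow> real"
  assumes "continuous_on {a..b} f" "continuous_on {a..b} g" "0 < m"
    and "\<And>y. y \<in> {a..b} \<Longrightarrow> m \<le> f y \<and> m \<le> g y"
  shows "L1_norm_on a b (\<lambda>y. 1 / f y - 1 / g y) \<le> L1_norm_on a b (\<lambda>y. f y - g y) / m\<^sup>2"
proof -
  have pos: "\<And>y. y \<in> {a..b} \<Longrightarrow> f y \<noteq> 0 \<and> g y \<noteq> 0"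
    using assms(3,4) by force
  have "integral {a..b} (\<lambda>y. \<bar>1 / f y - 1 / g y\<bar>) \<le> integral {a..b} (\<lambda>y. \<bar>f y - g y\<bar> / m\<^sup>2)"
    by (rule integral_le)
      (use assms pos abs_inverse_diff_le in \<open>auto intro!: integrable_continuous_real continuous_intros\<close>)
  then show ?thesis unfolding L1_norm_on_def by simp
qed

lemma time_along_solution:
  fixes h x :: "real \<Rightarrow> real"
  assumes hc: "continuous_on {a..b} h" and hpos: "\<And>y. y \<in> {a..b} \<Longrightarrow> 0 < h y"
    and J: "is_interval J" "0 \<in> J" and xJ: "x ` J \<subseteq> {a..b}"
    and x': "\<And>t. t \<in> J \<Longrightarrow> (x has_real_derivative h (x t)) (at t within J)"
    and "t \<in> J"
  shows "integral {a..x t} (\<lambda>y. 1 / h y) - integral {a..x 0} (\<lambda>y. 1 / h y) = t"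
proof -
  define T where "T u = integral {a..u} (\<lambda>y. 1 / h y)" for u
  have ic: "continuous_on {a..b} (\<lambda>y. 1 / h y)"
    using hc hpos by (intro continuous_intros) (auto simp: less_imp_neq[symmetric])
  have "((\<lambda>s. T (x s) - s) has_real_derivative 0) (at s within J)" if s: "s \<in> J" for s
  proof -
    have xs: "x s \<in> {a..b}" using xJ s by auto
    have "(T has_real_derivative 1 / h (x s)) (at (x s) within {a..b})"
      unfolding T_def by (rule integral_has_real_derivative[OF ic xs])
    then have "(T has_real_derivative 1 / h (x s)) (at (x s) within x ` J)"
      using xJ by (rule has_field_derivative_subset)
    from DERIV_image_chain[OF this x'[OF s]]
    have "((\<lambda>s. T (x s)) has_real_derivative 1) (at s within J)"
      using hpos[OF xs] by (simp add: o_def)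
    then show ?thesis by (auto intro!: derivative_eq_intros)
  qed
  then obtain c where "\<forall>s\<in>J. T (x s) - s = c"
    using has_field_derivative_zero_constant[OF is_interval_convex[OF J(1)]] by blast
  then have "T (x t) - t = c" "T (x 0) - 0 = c"
    using J(2) \<open>t \<in> J\<close> by blast+
  then show ?thesis
    unfolding T_def by simp
qed

theorem lemma4p1:
  fixes \<alpha> \<beta> m M x0 :: real
    and f g \<gamma> \<eta> :: "real \<Rightarrow> real"
    and J\<gamma> J\<eta> :: "real set"
  assumes "\<alpha> \<le> \<beta>"
    and "continuous_on {\<alpha>..\<beta>} f" and "continuous_on {\<alpha>..\<beta>} g"
    and "0 < m" and "m < M"
    and "\<And>x. x \<in> {\<alpha>..\<beta>} \<Longrightarrow> m \<le> f x \<and> f x \<le> M"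
    and "\<And>x. x \<in> {\<alpha>..\<beta>} \<Longrightarrow> m \<le> g x \<and> g x \<le> M"
    and "max (L1_norm_on \<alpha> \<beta> (\<lambda>x. f x - g x)) (sup_norm_on \<alpha> \<beta> (\<lambda>x. f x - g x)) < m"
    and "x0 \<in> {\<alpha>..\<beta>}"
    and "is_interval J\<gamma>" and "0 \<in> J\<gamma>"
    and "\<gamma> 0 = x0" and "\<gamma> ` J\<gamma> \<subseteq> {\<alpha>..\<beta>}"
    and "\<And>t. t \<in> J\<gamma> \<Longrightarrow> (\<gamma> has_real_derivative f (\<gamma> t)) (at t within J\<gamma>)"
    and "is_interval J\<eta>" and "0 \<in> J\<eta>"
    and "\<eta> 0 = x0" and "\<eta> ` J\<eta> \<subseteq> {\<alpha>..\<beta>}"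
    and "\<And>t. t \<in> J\<eta> \<Longrightarrow> (\<eta> has_real_derivative g (\<eta> t)) (at t within J\<eta>)"
  shows "\<forall>t \<in> J\<gamma> \<inter> J\<eta>. \<bar>\<gamma> t - \<eta> t\<bar> \<le> M / m\<^sup>2 * L1_norm_on \<alpha> \<beta> (\<lambda>x. f x - g x)"
proof
  fix t assume t: "t \<in> J\<gamma> \<inter> J\<eta>"
  define T where "T h u = integral {\<alpha>..u} (\<lambda>y. 1 / h y)" for h :: "real \<Rightarrow> real" and u
  let ?L = "L1_norm_on \<alpha> \<beta> (\<lambda>x. f x - g x)"
  have fpos: "\<And>y. y \<in> {\<alpha>..\<beta>} \<Longrightarrow> 0 < f y" and gpos: "\<And>y. y \<in> {\<alpha>..\<beta>} \<Longrightarrow> 0 < g y"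
    using assms(4,6,7) by force+
  have fic: "continuous_on {\<alpha>..\<beta>} (\<lambda>y. 1 / f y)" and gic: "continuous_on {\<alpha>..\<beta>} (\<lambda>y. 1 / g y)"
    using assms(2,3) fpos gpos by (auto intro!: continuous_intros simp: less_imp_neq[symmetric])
  have \<gamma>t: "\<gamma> t \<in> {\<alpha>..\<beta>}" and \<eta>t: "\<eta> t \<in> {\<alpha>..\<beta>}"
    using t assms(13,18) by auto
  have "T f (\<gamma> t) - T f x0 = t" "T g (\<eta> t) - T g x0 = t"
    using time_along_solution[OF assms(2) fpos assms(10,11,13,14)]
      time_along_solution[OF assms(3) gpos assms(15,16,18,19)] t assms(12,17)
    unfolding T_def by auto
  moreover have "integral {\<alpha>..u} (\<lambda>y. 1 / g y - 1 / f y) = T g u - T f u" if "u \<in> {\<alpha>..\<beta>}" for u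
    unfolding T_def using that integrable_on_subinterval[OF fic] integrable_on_subinterval[OF gic]
    by (intro integral_diff) auto
  ultimately have "\<bar>T f (\<gamma> t) - T f (\<eta> t)\<bar>
      = \<bar>integral {\<alpha>..\<eta> t} (\<lambda>y. 1 / g y - 1 / f y) - integral {\<alpha>..x0} (\<lambda>y. 1 / g y - 1 / f y)\<bar>"
    using \<eta>t assms(9) by simp
  also have "\<dots> \<le> L1_norm_on \<alpha> \<beta> (\<lambda>y. 1 / g y - 1 / f y)"
    unfolding L1_norm_on_def
    by (rule abs_integral_diff_initial_segments_le[OF continuous_on_diff[OF gic fic] assms(9) \<eta>t])
  also have "\<dots> \<le> ?L / m\<^sup>2"
    using L1_norm_inverse_diff_le[OF assms(3,2,4)] assms(6,7)
    by (simp add: L1_norm_on_def abs_minus_commute)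
  finally have dT: "\<bar>T f (\<gamma> t) - T f (\<eta> t)\<bar> \<le> ?L / m\<^sup>2" .
  have "\<bar>\<gamma> t - \<eta> t\<bar> \<le> M * \<bar>T f (\<gamma> t) - T f (\<eta> t)\<bar>"
    unfolding T_def using dist_le_mult_dist_primitive_inverse[OF assms(2) _ \<gamma>t \<eta>t] assms(6) fpos by blast
  also have "\<dots> \<le> M * (?L / m\<^sup>2)"
    using dT assms(4,5) by (intro mult_left_mono) auto
  finally show "\<bar>\<gamma> t - \<eta> t\<bar> \<le> M / m\<^sup>2 * ?L"
    by simp
qed

end
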